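(* Let $G_1$ and $G_2$ be graphs on $n$ nodes with Laplacian matrices $Q_1,Q_2$, let $k\in\{1,\dots,n\}$, and let $\hat B$ be an $n\times n$ zero-one matrix with exactly $k$ ones in every row and every column. For $p\ge 0$ let $$Q(p)=\begin{bmatrix} Q_1+kpI & -p\hat B\\ -p\hat B^T & Q_2+kpI\end{bmatrix},$$ with eigenvalues $0=\mu_N(p)\le \mu_{N-1}(p)\le\dots\le\mu_1(p)$, $N=2n$. Define the transition threshold $p^*=\sup\big(\{0\}\cup\{p>0:\ \mu_{N-1}(p)=2kp\}\big)$. Then $$p^*\ge \frac{1}{2k}\min\big(\mu_{n-1}(Q_1),\ \mu_{n-1}(Q_2)\big),$$ where $\mu_{n-1}(Q_i)$ denotes the second smallest eigenvalue (algebraic connectivity) of $Q_i$.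
   Context: $Q(p)$ is the Laplacian of the two-layer interdependent network with a $k$-to-$k$ interconnection of weight $p$; $2kp$ is always an eigenvalue of $Q(p)$ (eigenvector $[u^T,-u^T]^T$). The paper describes $p^*$ as the coupling value beyond which $\mu_{N-1}(p)\neq 2kp$; here it is formalized as the supremum above. *)

theory Defs
  imports "Jordan_Normal_Form.Matrix" "Jordan_Normal_Form.Char_Poly"
begin

definition simple_graph :: "nat \<Rightarrow> (nat \<Rightarrow> nat \<Rightarrow> bool) \<Rightarrow> bool" where
  "simple_graph n E \<longleftrightarrow> (\<forall>i<n. \<forall>j<n. E i j = E j i) \<and> (\<forall>i<n. \<not> E i i)"

definition laplacian :: "nat \<Rightarrow> (nat \<Rightarrow> nat \<Rightarrow> bool) \<Rightarrow> real mat" where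
  "laplacian n E = mat n n (\<lambda>(i,j).
      if i = j then real (card {l. l < n \<and> E i l})
      else if E i j then -1 else 0)"

text \<open>Eigenvalues (with algebraic multiplicity) in ascending order: the unique sorted
  list xs with char_poly A = prod (X - x) over xs. (Exists for real symmetric matrices.)\<close>
definition asc_eigs :: "real mat \<Rightarrow> real list" where
  "asc_eigs A = (THE xs. sorted xs \<and> char_poly A = prod_list (map (\<lambda>x. [:-x, 1:]) xs))"

text \<open>Second smallest eigenvalue mu_{m-1} for an m x m matrix (eigenvalues labelled
  0 = mu_m <= mu_{m-1} <= ... <= mu_1).\<close>
definition second_smallest_eig :: "real mat \<Rightarrow> real" where
  "second_smallest_eig A = asc_eigs A ! 1"

definition supra_laplacian :: "nat \<Rightarrow> real mat \<Rightarrow> real mat \<Rightarrow> real mat \<Rightarrow> real \<Rightarrow> real mat" where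
  "supra_laplacian k Q1 Q2 B p =
     four_block_mat (Q1 + (real k * p) \<cdot>\<^sub>m 1\<^sub>m (dim_row Q1)) (- (p \<cdot>\<^sub>m B))
                    (- (p \<cdot>\<^sub>m transpose_mat B)) (Q2 + (real k * p) \<cdot>\<^sub>m 1\<^sub>m (dim_row Q2))"

definition k_regular_01 :: "nat \<Rightarrow> nat \<Rightarrow> real mat \<Rightarrow> bool" where
  "k_regular_01 n k B \<longleftrightarrow> B \<in> carrier_mat n n \<and>
     (\<forall>i<n. \<forall>j<n. B $$ (i,j) = 0 \<or> B $$ (i,j) = 1) \<and>
     (\<forall>i<n. card {j. j < n \<and> B $$ (i,j) = 1} = k) \<and>
     (\<forall>j<n. card {i. i < n \<and> B $$ (i,j) = 1} = k)"

definition transition_threshold :: "nat \<Rightarrow> real mat \<Rightarrow> real mat \<Rightarrow> real mat \<Rightarrow> real" where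
  "transition_threshold k Q1 Q2 B =
     Sup ({0} \<union> {p. p > 0 \<and> second_smallest_eig (supra_laplacian k Q1 Q2 B p) = 2 * real k * p})"

end

(*
  The all-ones vector spans the kernel of the supra-Laplacian Q(p), so by the Courant-Fischer
  principle mu_{N-1}(Q(p)) is the minimum of the Rayleigh quotient of Q(p) over vectors x = (a, b)
  orthogonal to it, i.e. with sum a = - sum b = s. On such vectors the quadratic form splits as
    a^T Q1 a + b^T Q2 b + p (k |a|^2 + k |b|^2 - 2 a^T B b).
  The layer terms are at least mu_{n-1}(Q_i) times the variances |a|^2 - s^2/n and |b|^2 - s^2/n,
  and because B is a nonnegative matrix with all row and column sums k, the coupling term is at
  least 4 k s^2 / n. So if 2 k p <= min mu_{n-1}(Q_i), the Rayleigh quotient is at least 2 k p,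
  a value attained at (1, -1): such p lie in the set defining p*. That set is bounded, since a
  vector supported on one layer has Rayleigh quotient k p + O(1), so p* is a true supremum.
*)

theory Submission
  imports Defs "HOL-Combinatorics.Permutations"
begin

section \<open>Orthogonal diagonalization of real symmetric matrices\<close>

lemma order_prod_linear_factors:
  fixes xs :: "real list"
  shows "order a (\<Prod>x\<leftarrow>xs. [:-x, 1:]) = count (mset xs) a"
proof (induction xs)
  case Nil
  then show ?case by simp
next
  case (Cons x xs)
  have "(\<Prod>x\<leftarrow>xs. [:-x, 1:]) \<noteq> (0::real poly)"
    by (auto simp: prod_list_zero_iff)
  then have "order a ([:-x, 1:] * (\<Prod>x\<leftarrow>xs. [:-x, 1:]))
      = order a [:-x, 1:] + order a (\<Prod>x\<leftarrow>xs. [:-x, 1:])"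
    by (intro order_mult) (metis mult_eq_0_iff pCons_eq_0_iff zero_neq_one)
  moreover have "order a [:-x, 1:] = (if x = a then 1 else 0)"
    using order_power_n_n[of a 1] by (auto intro: order_0I)
  ultimately show ?case using Cons by simp
qed

lemma asc_eigs_eqI:
  assumes "char_poly M = (\<Prod>x\<leftarrow>d. [:-x, 1:])"
  shows "asc_eigs M = sort d"
  unfolding asc_eigs_def
proof (rule the_equality)
  show "sorted (sort d) \<and> char_poly M = (\<Prod>x\<leftarrow>sort d. [:-x, 1:])"
    using assms by (simp add: prod_mset_prod_list[symmetric])
  fix xs assume xs: "sorted xs \<and> char_poly M = (\<Prod>x\<leftarrow>xs. [:-x, 1:])"
  then have "mset xs = mset d"
    using assms by (intro multiset_eqI) (metis order_prod_linear_factors)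
  then show "xs = sort d" using xs by (metis properties_for_sort)
qed

lemma scalar_prod_self_pos:
  fixes v :: "real vec"
  assumes "v \<in> carrier_vec N" "v \<noteq> 0\<^sub>v N"
  shows "0 < v \<bullet> v"
proof -
  obtain i where i: "i < N" "v $ i \<noteq> 0"
    using assms by (metis carrier_vecD eq_vecI index_zero_vec)
  have "v $ i * v $ i \<le> (\<Sum>l\<in>{0..<N}. v $ l * v $ l)"
    by (rule member_le_sum) (use i in auto)
  moreover have "0 < v $ i * v $ i" using i by (simp flip: power2_eq_square)
  ultimately show ?thesis using assms by (simp add: scalar_prod_def)
qed

lemma complex_eigenvalue_of_real_symmetric_is_real:
  fixes M :: "real mat"
  assumes M: "M \<in> carrier_mat N N" "transpose_mat M = M"
    and v: "v \<in> carrier_vec N" "v \<noteq> 0\<^sub>v N" "map_mat complex_of_real M *\<^sub>v v = z \<cdot>\<^sub>v v"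
  shows "Im z = 0"
proof -
  have symM: "M $$ (i,j) = M $$ (j,i)" if "i < N" "j < N" for i j
    using that M by (metis carrier_matD index_transpose_mat(1))
  have row: "(\<Sum>j<N. of_real (M $$ (i,j)) * v $ j) = z * v $ i" if i: "i < N" for i
  proof -
    have "(map_mat complex_of_real M *\<^sub>v v) $ i = (\<Sum>j<N. of_real (M $$ (i,j)) * v $ j)"
      using i M v(1) by (auto simp: scalar_prod_def lessThan_atLeast0)
    then show ?thesis using v i by simp
  qed
  \<comment> \<open>The Hermitian form of v equals z times the squared norm of v, and it is real by symmetry.\<close>
  define S where "S = (\<Sum>i<N. \<Sum>j<N. cnj (v $ i) * (of_real (M $$ (i,j)) * v $ j))"
  define P where "P = (\<Sum>i<N. cnj (v $ i) * v $ i)"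
  have "S = (\<Sum>i<N. cnj (v $ i) * (\<Sum>j<N. of_real (M $$ (i,j)) * v $ j))"
    unfolding S_def by (simp add: sum_distrib_left)
  also have "\<dots> = (\<Sum>i<N. z * (cnj (v $ i) * v $ i))"
    by (intro sum.cong refl) (simp add: row)
  finally have Sz: "S = z * P" unfolding P_def by (simp add: sum_distrib_left)
  have "cnj S = (\<Sum>i<N. \<Sum>j<N. v $ i * (of_real (M $$ (i,j)) * cnj (v $ j)))"
    unfolding S_def by simp
  also have "\<dots> = (\<Sum>j<N. \<Sum>i<N. v $ i * (of_real (M $$ (i,j)) * cnj (v $ j)))"
    by (rule sum.swap)
  also have "\<dots> = S"
    unfolding S_def by (intro sum.cong refl) (simp add: symM mult.commute mult.left_commute)
  finally have S_real: "cnj S = S" .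
  have P: "P = of_real (\<Sum>i<N. (cmod (v $ i))\<^sup>2)"
    unfolding P_def by (simp add: complex_norm_square[symmetric] mult.commute del: of_real_power)
  obtain i where i: "i < N" "v $ i \<noteq> 0"
    using v by (metis carrier_vecD eq_vecI index_zero_vec)
  have "0 < (cmod (v $ i))\<^sup>2" using i by simp
  also have "\<dots> \<le> (\<Sum>i<N. (cmod (v $ i))\<^sup>2)"
    by (rule member_le_sum) (use i in auto)
  finally have "P \<noteq> 0" unfolding P by (metis of_real_eq_0_iff less_irrefl)
  moreover have "cnj P = P" unfolding P by (metis complex_cnj_complex_of_real)
  moreover have "cnj S = cnj z * cnj P" using Sz by simp
  ultimately have "cnj z = z" using Sz S_real by simp
  then have "Im (cnj z) = Im z" by simp
  then show ?thesis by simp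
qed

lemma real_symmetric_has_eigenvector:
  fixes M :: "real mat"
  assumes M: "M \<in> carrier_mat N N" and sym: "transpose_mat M = M" and N: "0 < N"
  obtains l v where "v \<in> carrier_vec N" "v \<noteq> 0\<^sub>v N" "M *\<^sub>v v = l \<cdot>\<^sub>v v"
proof -
  let ?Mc = "map_mat complex_of_real M"
  have Mc: "?Mc \<in> carrier_mat N N" using M by simp
  have "degree (char_poly ?Mc) = N" using degree_monic_char_poly[OF Mc] by simp
  then obtain z where z: "poly (char_poly ?Mc) z = 0"
    using fundamental_theorem_of_algebra[of "char_poly ?Mc"] N constant_degree by force
  then obtain v where "v \<in> carrier_vec N" "v \<noteq> 0\<^sub>v N" "?Mc *\<^sub>v v = z \<cdot>\<^sub>v v"
    using eigenvalue_root_char_poly[OF Mc] Mc unfolding eigenvalue_def eigenvector_def by auto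
  then have "z = of_real (Re z)"
    using complex_eigenvalue_of_real_symmetric_is_real[OF M sym] by (simp add: complex_eq_iff)
  then have "poly (char_poly M) (Re z) = 0"
    using z of_real_hom.char_poly_hom[OF M] of_real_hom.poly_map_poly by (metis of_real_eq_0_iff)
  then have "eigenvalue M (Re z)" using eigenvalue_root_char_poly[OF M] by simp
  then show ?thesis using that M unfolding eigenvalue_def eigenvector_def by auto
qed

lemma sum_delta_left: "(i::nat) < N \<Longrightarrow> (\<Sum>l\<in>{0..<N}. (if i = l then c else 0) * f l) = c * (f i :: real)"
  by (simp add: if_distrib[of "\<lambda>x. x * _"] sum.delta cong: if_cong)

lemma sum_delta_right: "(j::nat) < N \<Longrightarrow> (\<Sum>l\<in>{0..<N}. f l * (if l = j then 1 else 0)) = (f j :: real)"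
  by (simp add: if_distrib[of "\<lambda>x. _ * x"] sum.delta' cong: if_cong)

definition reflection_mat :: "nat \<Rightarrow> (nat \<Rightarrow> real) \<Rightarrow> real mat" where
  "reflection_mat N w = mat N N (\<lambda>(i,j).
     (if i = j then 1 else 0) - 2 / (\<Sum>l\<in>{0..<N}. w l * w l) * w i * w j)"

lemma reflection_mat_symmetric: "transpose_mat (reflection_mat N w) = reflection_mat N w"
  unfolding reflection_mat_def by (rule eq_matI) auto

lemma reflection_mat_involutive:
  assumes ww: "0 < (\<Sum>l\<in>{0..<N}. w l * w l)"
  shows "reflection_mat N w * reflection_mat N w = 1\<^sub>m N"
proof -
  define ww where "ww = (\<Sum>l\<in>{0..<N}. w l * w l)"
  define c where "c = 2 / ww"
  have W: "reflection_mat N w = mat N N (\<lambda>(i,j). (if i = j then 1 else 0) - c * w i * w j)"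
    unfolding reflection_mat_def c_def ww_def ..
  show ?thesis
  proof (rule eq_matI)
    fix i j assume "i < dim_row (1\<^sub>m N)" "j < dim_col (1\<^sub>m N)"
    then have i: "i < N" and j: "j < N" by auto
    have "(reflection_mat N w * reflection_mat N w) $$ (i,j)
        = (\<Sum>l\<in>{0..<N}. ((if i = l then 1 else 0) - c * w i * w l) * ((if l = j then 1 else 0) - c * w l * w j))"
      using i j unfolding W by (simp add: scalar_prod_def)
    also have "\<dots> = (\<Sum>l\<in>{0..<N}. (if i = l then 1 else 0) * (if l = j then 1 else 0))
        - (\<Sum>l\<in>{0..<N}. (if i = l then 1 else 0) * (c * w l * w j))
        - (\<Sum>l\<in>{0..<N}. (c * w i * w l) * (if l = j then 1 else 0))
        + c * c * w i * w j * ww"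
      unfolding ww_def by (simp add: algebra_simps sum.distrib sum_subtractf sum_distrib_left)
    also have "\<dots> = (if i = j then 1 else 0) - 2 * c * w i * w j + c * c * w i * w j * ww"
      using i j by (simp add: sum_delta_left sum_delta_right)
    also have "\<dots> = (if i = j then 1 else 0)"
      unfolding c_def using ww by (simp add: ww_def field_simps)
    finally show "(reflection_mat N w * reflection_mat N w) $$ (i,j) = 1\<^sub>m N $$ (i,j)"
      using i j by simp
  qed (auto simp: W)
qed

lemma orthogonal_mat_with_first_column:
  fixes u :: "real vec"
  assumes u: "u \<in> carrier_vec N" and uu: "u \<bullet> u = 1" and N: "0 < N"
  obtains W where "W \<in> carrier_mat N N" "transpose_mat W * W = 1\<^sub>m N" "W *\<^sub>v unit_vec N 0 = u"
proof (cases "u = unit_vec N 0")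
  case True
  then show ?thesis using that[of "1\<^sub>m N"] by simp
next
  case False
  \<comment> \<open>The reflection in the hyperplane orthogonal to w = u - e0 maps e0 to u.\<close>
  define w where "w = (\<lambda>i. u $ i - (if i = 0 then 1 else 0::real))"
  define ww where "ww = (\<Sum>l\<in>{0..<N}. w l * w l)"
  have "(\<Sum>l\<in>{0..<N}. u $ l * u $ l) = 1" using uu u by (simp add: scalar_prod_def)
  moreover have "ww = (\<Sum>l\<in>{0..<N}. u $ l * u $ l - 2 * (if l = 0 then u $ l else 0) + (if l = 0 then 1 else 0))"
    unfolding ww_def w_def by (intro sum.cong refl) (auto simp: algebra_simps)
  ultimately have ww2: "ww = 2 - 2 * u $ 0"
    using N by (simp add: sum.distrib sum_subtractf sum_distrib_left[symmetric] sum.delta)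
  have "\<exists>i<N. u $ i \<noteq> unit_vec N 0 $ i"
  proof (rule ccontr)
    assume "\<not> (\<exists>i<N. u $ i \<noteq> unit_vec N 0 $ i)"
    then have "u = unit_vec N 0" using u by (intro eq_vecI) auto
    with False show False ..
  qed
  then obtain i where i: "i < N" "w i \<noteq> 0" unfolding w_def by auto
  then have "0 < w i * w i" by (simp flip: power2_eq_square)
  also have "w i * w i \<le> ww" unfolding ww_def
    by (rule member_le_sum) (use i in auto)
  finally have wwpos: "0 < ww" .
  have cw0: "2 / ww * w 0 = -1" unfolding w_def using ww2 wwpos by (simp add: field_simps)
  have "reflection_mat N w *\<^sub>v unit_vec N 0 = u"
  proof (rule eq_vecI)
    fix i assume "i < dim_vec u"
    then have i: "i < N" using u by simp
    have "(reflection_mat N w *\<^sub>v unit_vec N 0) $ i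
        = (\<Sum>l\<in>{0..<N}. reflection_mat N w $$ (i,l) * (if l = 0 then 1 else 0))"
      using i by (auto simp: reflection_mat_def scalar_prod_def unit_vec_def intro!: sum.cong)
    also have "\<dots> = (if i = 0 then 1 else 0) - 2 / ww * w 0 * w i"
      using i N by (simp add: sum_delta_right reflection_mat_def ww_def)
    also have "\<dots> = u $ i" using cw0 unfolding w_def by (simp add: mult.assoc[symmetric])
    finally show "(reflection_mat N w *\<^sub>v unit_vec N 0) $ i = u $ i" .
  qed (use u in \<open>simp add: reflection_mat_def\<close>)
  moreover have "reflection_mat N w * reflection_mat N w = 1\<^sub>m N"
    using wwpos unfolding ww_def by (rule reflection_mat_involutive)
  ultimately show ?thesis
    using that[of "reflection_mat N w"] reflection_mat_symmetric[of N w] by (simp add: reflection_mat_def)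
qed

definition orthogonal_diagonalization :: "nat \<Rightarrow> real mat \<Rightarrow> real mat \<Rightarrow> real list \<Rightarrow> bool" where
  "orthogonal_diagonalization N M U d \<longleftrightarrow>
     M \<in> carrier_mat N N \<and> U \<in> carrier_mat N N \<and> transpose_mat U * U = 1\<^sub>m N \<and>
     length d = N \<and> transpose_mat U * M * U = mat_diag N (\<lambda>i. d ! i)"

lemma orthogonal_diagonalization_four_block:
  assumes "orthogonal_diagonalization n A V d"
  shows "orthogonal_diagonalization (Suc n)
           (four_block_mat (mat 1 1 (\<lambda>_. l)) (0\<^sub>m 1 n) (0\<^sub>m n 1) A)
           (four_block_mat (1\<^sub>m 1) (0\<^sub>m 1 n) (0\<^sub>m n 1) V) (l # d)"
proof -
  have A: "A \<in> carrier_mat n n" and V: "V \<in> carrier_mat n n" and VV: "transpose_mat V * V = 1\<^sub>m n"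
    and d: "length d = n" and D: "transpose_mat V * A * V = mat_diag n (\<lambda>i. d ! i)"
    using assms unfolding orthogonal_diagonalization_def by auto
  let ?L = "mat 1 1 (\<lambda>_. l)"
  let ?V = "four_block_mat (1\<^sub>m 1) (0\<^sub>m 1 n) (0\<^sub>m n 1) V"
  have VT: "transpose_mat ?V = four_block_mat (1\<^sub>m 1) (0\<^sub>m 1 n) (0\<^sub>m n 1) (transpose_mat V)"
    using V by (simp add: transpose_four_block_mat[of _ 1 1 _ n _ n])
  have VTc: "transpose_mat V \<in> carrier_mat n n" using V by simp
  have "transpose_mat ?V * ?V = 1\<^sub>m (Suc n)"
    unfolding VT using V VTc VV by (simp add: mult_four_block_mat[of _ 1 1 _ n _ n _ _ 1 _ n])
  moreover have "transpose_mat ?V * four_block_mat ?L (0\<^sub>m 1 n) (0\<^sub>m n 1) A * ?V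
      = four_block_mat ?L (0\<^sub>m 1 n) (0\<^sub>m n 1) (transpose_mat V * A * V)"
    unfolding VT using V VTc A by (simp add: mult_four_block_mat[of _ 1 1 _ n _ n _ _ 1 _ n])
  moreover have "four_block_mat ?L (0\<^sub>m 1 n) (0\<^sub>m n 1) (mat_diag n (\<lambda>i. d ! i))
      = mat_diag (Suc n) (\<lambda>i. (l # d) ! i)"
    by (rule eq_matI) (auto simp: mat_diag_def nth_Cons')
  ultimately show ?thesis
    unfolding orthogonal_diagonalization_def D using A V d by auto
qed

lemma orthogonal_diagonalization_mult:
  assumes W: "W \<in> carrier_mat N N" "transpose_mat W * W = 1\<^sub>m N"
    and od: "orthogonal_diagonalization N (transpose_mat W * M * W) V d"
    and M: "M \<in> carrier_mat N N"
  shows "orthogonal_diagonalization N M (W * V) d"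
proof -
  have V: "V \<in> carrier_mat N N" and VV: "transpose_mat V * V = 1\<^sub>m N"
    and D: "transpose_mat V * (transpose_mat W * M * W) * V = mat_diag N (\<lambda>i. d ! i)"
    using od unfolding orthogonal_diagonalization_def by auto
  have WVT: "transpose_mat (W * V) = transpose_mat V * transpose_mat W"
    by (rule transpose_mult[OF W(1) V])
  have WT: "transpose_mat W \<in> carrier_mat N N" "transpose_mat V \<in> carrier_mat N N" using W V by auto
  have WV: "W * V \<in> carrier_mat N N" using W V by simp
  have "transpose_mat (W * V) * (W * V) = transpose_mat V * (transpose_mat W * (W * V))"
    unfolding WVT by (rule assoc_mult_mat[OF WT(2,1) WV])
  also have "transpose_mat W * (W * V) = transpose_mat W * W * V"
    by (rule assoc_mult_mat[OF WT(1) W(1) V, symmetric])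
  finally have "transpose_mat (W * V) * (W * V) = 1\<^sub>m N" using W(2) VV V by simp
  moreover have "transpose_mat (W * V) * M * (W * V) = transpose_mat V * (transpose_mat W * M * W) * V"
    unfolding WVT using W V WT M by (simp add: assoc_mult_mat[of _ N N _ N _ N])
  ultimately show ?thesis
    using od W V VV D M unfolding orthogonal_diagonalization_def by simp
qed

lemma symmetric_mat_with_eigvec_unit0_split:
  fixes A :: "real mat"
  assumes A: "A \<in> carrier_mat (Suc n) (Suc n)" and sym: "transpose_mat A = A"
    and e0: "A *\<^sub>v unit_vec (Suc n) 0 = l \<cdot>\<^sub>v unit_vec (Suc n) 0"
  defines "A' \<equiv> mat n n (\<lambda>(i,j). A $$ (Suc i, Suc j))"
  shows "A = four_block_mat (mat 1 1 (\<lambda>_. l)) (0\<^sub>m 1 n) (0\<^sub>m n 1) A'"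
    and "transpose_mat A' = A'"
proof -
  have Asym: "A $$ (i,j) = A $$ (j,i)" if "i < Suc n" "j < Suc n" for i j
    using sym A that by (metis carrier_matD index_transpose_mat(1))
  have Acol: "A $$ (i,0) = (if i = 0 then l else 0)" if i: "i < Suc n" for i
  proof -
    have "(A *\<^sub>v unit_vec (Suc n) 0) $ i = (\<Sum>j\<in>{0..<Suc n}. A $$ (i,j) * (if j = 0 then 1 else 0))"
      using A i by (auto simp: scalar_prod_def unit_vec_def intro!: sum.cong)
    also have "\<dots> = A $$ (i,0)" by (simp add: sum_delta_right)
    finally show ?thesis using e0 i by (cases "i = 0") simp_all
  qed
  show "A = four_block_mat (mat 1 1 (\<lambda>_. l)) (0\<^sub>m 1 n) (0\<^sub>m n 1) A'"
  proof (rule eq_matI)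
    fix i j assume "i < dim_row (four_block_mat (mat 1 1 (\<lambda>_. l)) (0\<^sub>m 1 n) (0\<^sub>m n 1) A')"
      "j < dim_col (four_block_mat (mat 1 1 (\<lambda>_. l)) (0\<^sub>m 1 n) (0\<^sub>m n 1) A')"
    then have i: "i < Suc n" and j: "j < Suc n" by (auto simp: A'_def)
    show "A $$ (i, j) = four_block_mat (mat 1 1 (\<lambda>_. l)) (0\<^sub>m 1 n) (0\<^sub>m n 1) A' $$ (i, j)"
    proof (cases "i = 0")
      case True
      then show ?thesis using j Acol[OF j] Asym[OF i j] by (auto simp: A'_def)
    next
      case False
      then show ?thesis using i j Acol[OF i] unfolding A'_def
        by (cases "j = 0") (auto simp: not0_implies_Suc)
    qed
  qed (use A in \<open>auto simp: A'_def\<close>)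
  show "transpose_mat A' = A'"
    unfolding A'_def by (rule eq_matI) (auto intro: Asym)
qed

lemma real_symmetric_deflation:
  fixes M :: "real mat"
  assumes M: "M \<in> carrier_mat (Suc n) (Suc n)" and sym: "transpose_mat M = M"
  obtains l W A where "W \<in> carrier_mat (Suc n) (Suc n)" "transpose_mat W * W = 1\<^sub>m (Suc n)"
    "transpose_mat W * M * W = four_block_mat (mat 1 1 (\<lambda>_. l)) (0\<^sub>m 1 n) (0\<^sub>m n 1) A"
    "A \<in> carrier_mat n n" "transpose_mat A = A"
proof -
  obtain l v where v: "v \<in> carrier_vec (Suc n)" "v \<noteq> 0\<^sub>v (Suc n)" "M *\<^sub>v v = l \<cdot>\<^sub>v v"
    using real_symmetric_has_eigenvector[OF M sym zero_less_Suc] by blast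
  have vv: "0 < v \<bullet> v" by (rule scalar_prod_self_pos[OF v(1,2)])
  define u where "u = (1 / sqrt (v \<bullet> v)) \<cdot>\<^sub>v v"
  have u: "u \<in> carrier_vec (Suc n)" unfolding u_def using v by simp
  have uu: "u \<bullet> u = 1" unfolding u_def using v vv by (simp add: real_sqrt_mult[symmetric])
  have Mu: "M *\<^sub>v u = l \<cdot>\<^sub>v u" unfolding u_def using mult_mat_vec[OF M v(1)] v(3)
    by (simp add: smult_smult_assoc mult.commute)
  obtain W where W: "W \<in> carrier_mat (Suc n) (Suc n)" "transpose_mat W * W = 1\<^sub>m (Suc n)"
    and We0: "W *\<^sub>v unit_vec (Suc n) 0 = u"
    using orthogonal_mat_with_first_column[OF u uu] by auto
  have WT: "transpose_mat W \<in> carrier_mat (Suc n) (Suc n)" using W by simp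
  define A where "A = transpose_mat W * M * W"
  have A: "A \<in> carrier_mat (Suc n) (Suc n)" unfolding A_def using W M by simp
  have "transpose_mat A = transpose_mat W * transpose_mat (transpose_mat W * M)"
    unfolding A_def using W M by (intro transpose_mult) auto
  also have "transpose_mat (transpose_mat W * M) = transpose_mat M * W"
    using transpose_mult[OF WT M] by simp
  finally have symA: "transpose_mat A = A" unfolding A_def sym using W M WT
    by (simp add: assoc_mult_mat[of _ "Suc n" "Suc n" _ "Suc n" _ "Suc n"])
  have "A *\<^sub>v unit_vec (Suc n) 0 = transpose_mat W *\<^sub>v (M *\<^sub>v (W *\<^sub>v unit_vec (Suc n) 0))"
    unfolding A_def using W M by (simp add: assoc_mult_mat_vec[of _ "Suc n" "Suc n" _ "Suc n"])
  also have "\<dots> = l \<cdot>\<^sub>v (transpose_mat W *\<^sub>v (W *\<^sub>v unit_vec (Suc n) 0))"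
    unfolding We0 Mu using mult_mat_vec[OF WT u] by simp
  also have "\<dots> = l \<cdot>\<^sub>v unit_vec (Suc n) 0"
    using W by (simp add: assoc_mult_mat_vec[of _ "Suc n" "Suc n" _ "Suc n", symmetric])
  finally have Ae0: "A *\<^sub>v unit_vec (Suc n) 0 = l \<cdot>\<^sub>v unit_vec (Suc n) 0" .
  define A' where "A' = mat n n (\<lambda>(i,j). A $$ (Suc i, Suc j))"
  note split = symmetric_mat_with_eigvec_unit0_split[OF A symA Ae0, folded A'_def]
  show ?thesis
  proof (rule that[OF W])
    show "transpose_mat W * M * W = four_block_mat (mat 1 1 (\<lambda>_. l)) (0\<^sub>m 1 n) (0\<^sub>m n 1) A'"
      unfolding A_def[symmetric] by (rule split(1))
    show "A' \<in> carrier_mat n n" unfolding A'_def by simp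
    show "transpose_mat A' = A'" by (rule split(2))
  qed
qed

theorem real_symmetric_orthogonal_diagonalization:
  fixes M :: "real mat"
  assumes "M \<in> carrier_mat N N" "transpose_mat M = M"
  shows "\<exists>U d. orthogonal_diagonalization N M U d"
  using assms
proof (induction N arbitrary: M)
  case 0
  then show ?case
    by (intro exI[of _ "1\<^sub>m 0"] exI[of _ "[]"])
      (auto simp: orthogonal_diagonalization_def mat_diag_def intro!: eq_matI)
next
  case (Suc n)
  obtain l W A where W: "W \<in> carrier_mat (Suc n) (Suc n)" "transpose_mat W * W = 1\<^sub>m (Suc n)"
    and MW: "transpose_mat W * M * W = four_block_mat (mat 1 1 (\<lambda>_. l)) (0\<^sub>m 1 n) (0\<^sub>m n 1) A"
    and A: "A \<in> carrier_mat n n" "transpose_mat A = A"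
    using real_symmetric_deflation[OF Suc.prems] by blast
  obtain V d where "orthogonal_diagonalization n A V d" using Suc.IH[OF A] by blast
  then have "orthogonal_diagonalization (Suc n) (transpose_mat W * M * W)
      (four_block_mat (1\<^sub>m 1) (0\<^sub>m 1 n) (0\<^sub>m n 1) V) (l # d)"
    unfolding MW by (rule orthogonal_diagonalization_four_block)
  then show ?case using orthogonal_diagonalization_mult[OF W _ Suc.prems(1)] by blast
qed

context
  fixes N :: nat and M U :: "real mat" and d :: "real list"
  assumes od: "orthogonal_diagonalization N M U d"
begin

lemma orthogonal_diagonalization_carrier:
  "M \<in> carrier_mat N N" "U \<in> carrier_mat N N" "transpose_mat U \<in> carrier_mat N N" "length d = N"
  using od unfolding orthogonal_diagonalization_def by auto

lemma orthogonal_diagonalization_right_inverse: "U * transpose_mat U = 1\<^sub>m N"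
  using od orthogonal_diagonalization_carrier
  by (intro mat_mult_left_right_inverse[of "transpose_mat U"]) (auto simp: orthogonal_diagonalization_def)

lemma orthogonal_diagonalization_asc_eigs: "asc_eigs M = sort d"
proof -
  note c = orthogonal_diagonalization_carrier
  have "U * (transpose_mat U * M * U) * transpose_mat U = (U * transpose_mat U) * M * (U * transpose_mat U)"
    using c by (simp add: assoc_mult_mat[of _ N N _ N _ N])
  then have "M = U * mat_diag N (\<lambda>i. d ! i) * transpose_mat U"
    using od c(1) unfolding orthogonal_diagonalization_right_inverse orthogonal_diagonalization_def by simp
  then have "similar_mat M (mat_diag N (\<lambda>i. d ! i))"
    using c orthogonal_diagonalization_right_inverse od
    by (intro similar_matI[of _ _ _ _ N]) (auto simp: orthogonal_diagonalization_def)
  then have "char_poly M = char_poly (mat_diag N (\<lambda>i. d ! i))"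
    by (rule char_poly_similar)
  also have "\<dots> = (\<Prod>x\<leftarrow>diag_mat (mat_diag N (\<lambda>i. d ! i)). [:-x, 1:])"
    by (rule char_poly_upper_triangular[OF mat_diag_dim]) (auto simp: upper_triangular_def mat_diag_def)
  also have "diag_mat (mat_diag N (\<lambda>i. d ! i)) = d"
    unfolding diag_mat_def mat_diag_def using c(4) by (intro nth_equalityI) auto
  finally have "char_poly M = (\<Prod>x\<leftarrow>d. [:-x, 1:])" .
  then show ?thesis by (rule asc_eigs_eqI)
qed

lemma orthogonal_diagonalization_inner:
  assumes x: "x \<in> carrier_vec N" and y: "y \<in> carrier_vec N"
  shows "x \<bullet> y = (\<Sum>i\<in>{0..<N}. (transpose_mat U *\<^sub>v x) $ i * (transpose_mat U *\<^sub>v y) $ i)"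
proof -
  note c = orthogonal_diagonalization_carrier
  have "y = U *\<^sub>v (transpose_mat U *\<^sub>v y)"
    using orthogonal_diagonalization_right_inverse c y
    by (simp add: assoc_mult_mat_vec[of _ N N _ N, symmetric])
  then have "x \<bullet> y = (transpose_mat U *\<^sub>v x) \<bullet> (transpose_mat U *\<^sub>v y)"
    using transpose_vec_mult_scalar[OF c(2), of "transpose_mat U *\<^sub>v y" x] c x y by simp
  then show ?thesis using c by (simp add: scalar_prod_def)
qed

lemma orthogonal_diagonalization_mult_vec:
  assumes x: "x \<in> carrier_vec N" and i: "i < N"
  shows "(transpose_mat U *\<^sub>v (M *\<^sub>v x)) $ i = d ! i * (transpose_mat U *\<^sub>v x) $ i"
proof -
  note c = orthogonal_diagonalization_carrier
  have D: "transpose_mat U * M * U = mat_diag N (\<lambda>i. d ! i)"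
    using od unfolding orthogonal_diagonalization_def by simp
  have "(transpose_mat U * M * U) *\<^sub>v (transpose_mat U *\<^sub>v x)
      = (transpose_mat U * M) *\<^sub>v ((U * transpose_mat U) *\<^sub>v x)"
    using c x by (simp add: assoc_mult_mat_vec[of _ N N _ N])
  then have "transpose_mat U *\<^sub>v (M *\<^sub>v x) = (transpose_mat U * M * U) *\<^sub>v (transpose_mat U *\<^sub>v x)"
    using c x orthogonal_diagonalization_right_inverse by (simp add: assoc_mult_mat_vec[of _ N N _ N])
  also have "\<dots> = mat_diag N (\<lambda>i. d ! i) *\<^sub>v (transpose_mat U *\<^sub>v x)"
    unfolding D ..
  also have "\<dots> $ i = (\<Sum>l\<in>{0..<N}. (if i = l then 1 else 0) * (d ! i * (transpose_mat U *\<^sub>v x) $ l))"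
    using i c by (auto simp: mat_diag_def scalar_prod_def intro!: sum.cong)
  also have "\<dots> = d ! i * (transpose_mat U *\<^sub>v x) $ i"
    using sum_delta_left[OF i, of 1] by simp
  finally show ?thesis .
qed

lemma orthogonal_diagonalization_quadratic_form:
  assumes x: "x \<in> carrier_vec N"
  shows "x \<bullet> (M *\<^sub>v x) = (\<Sum>i\<in>{0..<N}. d ! i * ((transpose_mat U *\<^sub>v x) $ i * (transpose_mat U *\<^sub>v x) $ i))"
proof -
  have "x \<bullet> (M *\<^sub>v x) = (\<Sum>i\<in>{0..<N}. (transpose_mat U *\<^sub>v x) $ i * (transpose_mat U *\<^sub>v (M *\<^sub>v x)) $ i)"
    using orthogonal_diagonalization_inner[OF x, of "M *\<^sub>v x"] orthogonal_diagonalization_carrier x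
    by simp
  also have "\<dots> = (\<Sum>i\<in>{0..<N}. d ! i * ((transpose_mat U *\<^sub>v x) $ i * (transpose_mat U *\<^sub>v x) $ i))"
    using x by (intro sum.cong refl) (simp add: orthogonal_diagonalization_mult_vec)
  finally show ?thesis .
qed

lemma orthogonal_diagonalization_coords_surj:
  "transpose_mat U *\<^sub>v (U *\<^sub>v vec N y) = vec N y"
  using od orthogonal_diagonalization_carrier
  by (simp add: assoc_mult_mat_vec[of _ N N _ N, symmetric] orthogonal_diagonalization_def)

end

section \<open>Variational bounds for the second smallest eigenvalue\<close>

lemma sort_eq_permute_nth:
  "\<exists>p. p permutes {..<length d} \<and> (\<forall>k<length d. sort d ! k = d ! p k)"
proof -
  obtain p where p: "p permutes {..<length d}" "permute_list p d = sort d"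
    using mset_eq_permutation[of "sort d" d] by auto
  then show ?thesis using permute_list_nth[OF p(1)] by auto
qed

lemma sort_second_le_all_but_one:
  fixes d :: "'a::linorder list"
  assumes "2 \<le> length d"
  obtains i0 where "i0 < length d" "\<And>i. i < length d \<Longrightarrow> i \<noteq> i0 \<Longrightarrow> sort d ! 1 \<le> d ! i"
proof -
  obtain p where p: "p permutes {..<length d}" "\<forall>k<length d. sort d ! k = d ! p k"
    using sort_eq_permute_nth[of d] by blast
  show ?thesis
  proof (rule that[of "p 0"])
    have "d \<noteq> []" using assms by auto
    then show "p 0 < length d" using permutes_in_image[OF p(1), of 0] by simp
    fix i assume i: "i < length d" "i \<noteq> p 0"
    \<comment> \<open>Qualified because plain inv is HOL-Algebra's group inverse in this context.\<close>
    define k where "k = Hilbert_Choice.inv p i"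
    have k: "k < length d" "p k = i"
      using permutes_in_image[OF permutes_inv[OF p(1)], of i] i(1) permutes_inverses(1)[OF p(1), of i]
      unfolding k_def by simp_all
    then have "1 \<le> k" using i(2) by (cases k) simp_all
    then have "sort d ! 1 \<le> sort d ! k" using k by (intro sorted_nth_mono) auto
    then show "sort d ! 1 \<le> d ! i" using p(2)[rule_format, OF k(1)] k(2) by simp
  qed
qed

lemma sort_second_ge_two:
  fixes d :: "'a::linorder list"
  assumes "2 \<le> length d"
  obtains i0 i1 where "i0 < length d" "i1 < length d" "i0 \<noteq> i1"
    "d ! i0 \<le> sort d ! 1" "d ! i1 \<le> sort d ! 1"
proof -
  obtain p where p: "p permutes {..<length d}" "\<forall>k<length d. sort d ! k = d ! p k"
    using sort_eq_permute_nth[of d] by blast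
  have "d \<noteq> []" using assms by auto
  have "d ! p 0 = sort d ! 0" "d ! p 1 = sort d ! 1"
    using p(2)[rule_format, of 0] p(2)[rule_format, of 1] assms \<open>d \<noteq> []\<close> by simp_all
  moreover have "sort d ! 0 \<le> sort d ! 1" using assms by (intro sorted_nth_mono) auto
  moreover have "p 0 \<noteq> p 1" using permutes_inj[OF p(1)] by (auto dest: injD)
  moreover have "p 0 < length d" "p 1 < length d"
    using permutes_in_image[OF p(1), of 0] permutes_in_image[OF p(1), of 1] assms \<open>d \<noteq> []\<close>
    by simp_all
  ultimately show ?thesis using that[of "p 0" "p 1"] by simp
qed

lemma sum_two_points:
  fixes g :: "nat \<Rightarrow> real"
  assumes "i0 < N" "i1 < N" "i0 \<noteq> i1"
  shows "(\<Sum>i\<in>{0..<N}. (if i = i0 then a else if i = i1 then b else 0) * g i) = a * g i0 + b * g i1"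
proof -
  have "(\<Sum>i\<in>{0..<N}. (if i = i0 then a else if i = i1 then b else 0) * g i)
      = (\<Sum>i\<in>{0..<N}. (if i = i0 then a * g i0 else 0) + (if i = i1 then b * g i1 else 0))"
    using assms by (intro sum.cong) auto
  also have "\<dots> = a * g i0 + b * g i1"
    using assms by (simp only: sum.distrib sum.delta finite_atLeastLessThan) simp
  finally show ?thesis .
qed

lemma sort_second_mult_le_diag_form:
  fixes d :: "real list" and y z :: "nat \<Rightarrow> real"
  assumes len: "length d = N" and N: "2 \<le> N"
    and min: "\<And>i. i < N \<Longrightarrow> \<mu> \<le> d ! i"
    and eig: "\<And>i. i < N \<Longrightarrow> d ! i * z i = \<mu> * z i"
    and z: "j < N" "z j \<noteq> 0"
    and orth: "(\<Sum>i\<in>{0..<N}. y i * z i) = 0"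
  shows "sort d ! 1 * (\<Sum>i\<in>{0..<N}. y i * y i) \<le> (\<Sum>i\<in>{0..<N}. d ! i * (y i * y i))"
proof -
  let ?s = "sort d ! 1"
  obtain i0 where i0: "i0 < N" "\<And>i. i < N \<Longrightarrow> i \<noteq> i0 \<Longrightarrow> ?s \<le> d ! i"
    using sort_second_le_all_but_one[of d] len N by auto
  have "0 \<le> (d ! i - ?s) * (y i * y i)" if i: "i < N" for i
  proof (cases "?s \<le> d ! i")
    case False
    then have "i = i0" using i0 i by force
    \<comment> \<open>If the smallest entry lies strictly below the second one, then z is supported on it,
      and orthogonality kills the corresponding coordinate of y.\<close>
    have zl: "z l = 0" if l: "l < N" "l \<noteq> i0" for l
    proof (rule ccontr)
      assume "z l \<noteq> 0"
      then have "d ! l = \<mu>" using eig[OF l(1)] by simp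
      then show False using min[OF i] i0(2)[OF l] False by linarith
    qed
    have "(\<Sum>i\<in>{0..<N}. y i * z i) = (\<Sum>i\<in>{0..<N}. if i = i0 then y i0 * z i0 else 0)"
      by (intro sum.cong) (auto simp: zl)
    then have "y i0 * z i0 = 0" using orth i0(1) by simp
    moreover have "z i0 \<noteq> 0" using z zl by blast
    ultimately show ?thesis using \<open>i = i0\<close> by simp
  qed simp
  then have "0 \<le> (\<Sum>i\<in>{0..<N}. (d ! i - ?s) * (y i * y i))" by (intro sum_nonneg) auto
  then show ?thesis by (simp add: algebra_simps sum_subtractf sum_distrib_left)
qed

lemma sort_second_ge_of_diag_form:
  fixes d :: "real list" and z :: "nat \<Rightarrow> real"
  assumes len: "length d = N" and N: "2 \<le> N"
    and form: "\<And>y. (\<Sum>i\<in>{0..<N}. y i * z i) = 0 \<Longrightarrow>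
       c * (\<Sum>i\<in>{0..<N}. y i * y i) \<le> (\<Sum>i\<in>{0..<N}. d ! i * (y i * y i))"
  shows "c \<le> sort d ! 1"
proof -
  let ?s = "sort d ! 1"
  obtain i0 i1 where ii: "i0 < N" "i1 < N" "i0 \<noteq> i1" "d ! i0 \<le> ?s" "d ! i1 \<le> ?s"
    using sort_second_ge_two[of d] len N by auto
  \<comment> \<open>The test vector lives on two coordinates whose entries are at most the second smallest.\<close>
  obtain a b where ab: "a * z i0 + b * z i1 = 0" "0 < a * a + b * b"
  proof (cases "z i0 = 0 \<and> z i1 = 0")
    case True
    then show ?thesis using that[of 1 0] by simp
  next
    case False
    then have "0 < z i1 * z i1 + z i0 * z i0"
      by (auto simp flip: power2_eq_square intro: add_pos_nonneg add_nonneg_pos)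
    then show ?thesis using that[of "z i1" "- z i0"] by (simp add: algebra_simps)
  qed
  define y where "y = (\<lambda>i. if i = i0 then a else if i = i1 then b else (0::real))"
  have "(\<Sum>i\<in>{0..<N}. y i * z i) = a * z i0 + b * z i1"
    unfolding y_def by (rule sum_two_points[OF ii(1-3)])
  then have "c * (\<Sum>i\<in>{0..<N}. y i * y i) \<le> (\<Sum>i\<in>{0..<N}. d ! i * (y i * y i))"
    using ab by (intro form) simp
  moreover have "(\<Sum>i\<in>{0..<N}. y i * y i) = a * a + b * b"
    using sum_two_points[OF ii(1-3), of a b y] ii(3) by (simp add: y_def)
  moreover have "(\<Sum>i\<in>{0..<N}. d ! i * (y i * y i)) = d ! i0 * (a * a) + d ! i1 * (b * b)"
  proof -
    have "(\<Sum>i\<in>{0..<N}. d ! i * (y i * y i))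
        = (\<Sum>i\<in>{0..<N}. (if i = i0 then a else if i = i1 then b else 0) * (d ! i * y i))"
      unfolding y_def by (intro sum.cong) auto
    also have "\<dots> = a * (d ! i0 * y i0) + b * (d ! i1 * y i1)" by (rule sum_two_points[OF ii(1-3)])
    finally show ?thesis unfolding y_def using ii(3) by (simp add: algebra_simps)
  qed
  ultimately have "c * (a * a + b * b) \<le> d ! i0 * (a * a) + d ! i1 * (b * b)" by simp
  also have "\<dots> \<le> ?s * (a * a + b * b)"
    using ii(4,5) by (simp add: distrib_left add_mono mult_right_mono)
  finally have "c * (a * a + b * b) \<le> ?s * (a * a + b * b)" .
  then show ?thesis using ab(2) by simp
qed

lemma diag_form_orthogonal_combination:
  fixes d :: "real list" and y z :: "nat \<Rightarrow> real" and a b :: real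
  assumes eig: "\<And>i. i < N \<Longrightarrow> d ! i * z i = \<mu> * z i"
    and orth: "(\<Sum>i\<in>{0..<N}. y i * z i) = 0"
  defines "x \<equiv> \<lambda>i. a * z i - b * y i"
  shows "(\<Sum>i\<in>{0..<N}. d ! i * (x i * x i))
      = \<mu> * (a * a) * (\<Sum>i\<in>{0..<N}. z i * z i) + b * b * (\<Sum>i\<in>{0..<N}. d ! i * (y i * y i))"
    and "(\<Sum>i\<in>{0..<N}. x i * x i)
      = a * a * (\<Sum>i\<in>{0..<N}. z i * z i) + b * b * (\<Sum>i\<in>{0..<N}. y i * y i)"
proof -
  have "d ! i * (x i * x i) = \<mu> * (a * a) * (z i * z i) - 2 * \<mu> * a * b * (y i * z i)
      + b * b * (d ! i * (y i * y i))" if "i < N" for i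
  proof -
    have "d ! i * (x i * x i) = a * a * (d ! i * z i) * z i - 2 * a * b * (d ! i * z i) * y i
        + b * b * (d ! i * (y i * y i))"
      unfolding x_def by (simp add: algebra_simps)
    also have "\<dots> = \<mu> * (a * a) * (z i * z i) - 2 * \<mu> * a * b * (y i * z i)
        + b * b * (d ! i * (y i * y i))"
      unfolding eig[OF that] by (simp add: algebra_simps)
    finally show ?thesis .
  qed
  then have "(\<Sum>i\<in>{0..<N}. d ! i * (x i * x i)) = (\<Sum>i\<in>{0..<N}.
      \<mu> * (a * a) * (z i * z i) - 2 * \<mu> * a * b * (y i * z i) + b * b * (d ! i * (y i * y i)))"
    by (intro sum.cong) auto
  also have "\<dots> = \<mu> * (a * a) * (\<Sum>i\<in>{0..<N}. z i * z i) - 2 * \<mu> * a * b * (\<Sum>i\<in>{0..<N}. y i * z i)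
      + b * b * (\<Sum>i\<in>{0..<N}. d ! i * (y i * y i))"
    by (simp add: sum.distrib sum_subtractf sum_distrib_left mult.assoc)
  finally show "(\<Sum>i\<in>{0..<N}. d ! i * (x i * x i))
      = \<mu> * (a * a) * (\<Sum>i\<in>{0..<N}. z i * z i) + b * b * (\<Sum>i\<in>{0..<N}. d ! i * (y i * y i))"
    using orth by simp
  have "(\<Sum>i\<in>{0..<N}. x i * x i) = a * a * (\<Sum>i\<in>{0..<N}. z i * z i)
      - 2 * a * b * (\<Sum>i\<in>{0..<N}. y i * z i) + b * b * (\<Sum>i\<in>{0..<N}. y i * y i)"
    unfolding x_def by (simp add: algebra_simps sum.distrib sum_subtractf sum_distrib_left)
  then show "(\<Sum>i\<in>{0..<N}. x i * x i)
      = a * a * (\<Sum>i\<in>{0..<N}. z i * z i) + b * b * (\<Sum>i\<in>{0..<N}. y i * y i)"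
    using orth by simp
qed

lemma sort_second_le_of_diag_form:
  fixes d :: "real list" and y z :: "nat \<Rightarrow> real"
  assumes len: "length d = N" and N: "2 \<le> N"
    and eig: "\<And>i. i < N \<Longrightarrow> d ! i * z i = \<mu> * z i"
    and z: "j < N" "z j \<noteq> 0"
    and y: "k < N" "y k \<noteq> 0"
    and orth: "(\<Sum>i\<in>{0..<N}. y i * z i) = 0"
    and form: "(\<Sum>i\<in>{0..<N}. d ! i * (y i * y i)) \<le> c * (\<Sum>i\<in>{0..<N}. y i * y i)"
    and \<mu>: "\<mu> \<le> c"
  shows "sort d ! 1 \<le> c"
proof -
  let ?s = "sort d ! 1"
  obtain i0 where i0: "i0 < N" "\<And>i. i < N \<Longrightarrow> i \<noteq> i0 \<Longrightarrow> ?s \<le> d ! i"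
    using sort_second_le_all_but_one[of d] len N by auto
  show ?thesis
  proof (cases "z i0 = 0")
    case True
    then have "?s \<le> d ! j" using i0 z by fastforce
    moreover have "d ! j = \<mu>" using eig[OF z(1)] z(2) by simp
    ultimately show ?thesis using \<mu> by simp
  next
    case False
    \<comment> \<open>The combination x of y and z vanishing at i0 has Rayleigh quotient between the second
      smallest entry and c.\<close>
    let ?a = "y i0" and ?b = "z i0"
    define x where "x = (\<lambda>i. ?a * z i - ?b * y i)"
    let ?Y = "\<Sum>i\<in>{0..<N}. y i * y i" and ?Z = "\<Sum>i\<in>{0..<N}. z i * z i"
    note comb = diag_form_orthogonal_combination[OF eig orth, of "?a" "?b"]
    have dx: "(\<Sum>i\<in>{0..<N}. d ! i * (x i * x i)) = \<mu> * (?a * ?a) * ?Z + ?b * ?b * (\<Sum>i\<in>{0..<N}. d ! i * (y i * y i))"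
      unfolding x_def by (rule comb(1))
    have xx: "(\<Sum>i\<in>{0..<N}. x i * x i) = ?a * ?a * ?Z + ?b * ?b * ?Y"
      unfolding x_def by (rule comb(2))
    have Z: "0 \<le> ?Z" and bb: "0 < ?b * ?b" using False by (auto intro: sum_nonneg simp flip: power2_eq_square)
    have "y k * y k \<le> ?Y" by (rule member_le_sum) (use y in auto)
    moreover have "0 < y k * y k" using y by (simp flip: power2_eq_square)
    ultimately have "0 < ?b * ?b * ?Y" using bb by simp
    moreover have "0 \<le> ?a * ?a * ?Z" using Z by simp
    ultimately have X: "0 < (\<Sum>i\<in>{0..<N}. x i * x i)" unfolding xx by linarith
    have "?s * (\<Sum>i\<in>{0..<N}. x i * x i) \<le> (\<Sum>i\<in>{0..<N}. d ! i * (x i * x i))"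
    proof -
      have "0 \<le> (d ! i - ?s) * (x i * x i)" if "i < N" for i
        using i0(2)[OF that] by (cases "i = i0") (simp_all add: x_def)
      then have "0 \<le> (\<Sum>i\<in>{0..<N}. (d ! i - ?s) * (x i * x i))" by (intro sum_nonneg) auto
      then show ?thesis by (simp add: algebra_simps sum_subtractf sum_distrib_left)
    qed
    also have "\<dots> \<le> c * (?a * ?a) * ?Z + ?b * ?b * (c * ?Y)"
      unfolding dx using \<mu> Z form bb by (intro add_mono mult_right_mono mult_left_mono) auto
    also have "\<dots> = c * (\<Sum>i\<in>{0..<N}. x i * x i)" unfolding xx by (simp add: algebra_simps)
    finally show ?thesis using X by simp
  qed
qed

context
  fixes N :: nat and M U :: "real mat" and d :: "real list"
  assumes od: "orthogonal_diagonalization N M U d"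
begin

lemma orthogonal_diagonalization_eigvec_coords:
  assumes v: "v \<in> carrier_vec N" "M *\<^sub>v v = \<mu> \<cdot>\<^sub>v v" and i: "i < N"
  shows "d ! i * (transpose_mat U *\<^sub>v v) $ i = \<mu> * (transpose_mat U *\<^sub>v v) $ i"
  using orthogonal_diagonalization_mult_vec[OF od v(1) i] v(2) i
    mult_mat_vec[OF orthogonal_diagonalization_carrier(3)[OF od] v(1)]
    orthogonal_diagonalization_carrier[OF od]
  by auto

lemma orthogonal_diagonalization_coords_nonzero:
  assumes v: "v \<in> carrier_vec N" "v \<noteq> 0\<^sub>v N"
  obtains j where "j < N" "(transpose_mat U *\<^sub>v v) $ j \<noteq> 0"
proof -
  have pos: "0 < (\<Sum>i\<in>{0..<N}. (transpose_mat U *\<^sub>v v) $ i * (transpose_mat U *\<^sub>v v) $ i)"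
    using scalar_prod_self_pos[OF v] orthogonal_diagonalization_inner[OF od v(1) v(1)] by simp
  show ?thesis
  proof (rule ccontr)
    assume "\<not> thesis"
    then have "\<forall>j<N. (transpose_mat U *\<^sub>v v) $ j = 0" using that by blast
    then have "(\<Sum>i\<in>{0..<N}. (transpose_mat U *\<^sub>v v) $ i * (transpose_mat U *\<^sub>v v) $ i) = 0"
      by (intro sum.neutral) auto
    then show False using pos by simp
  qed
qed

lemma orthogonal_diagonalization_eigenvalue_ge:
  assumes min: "\<And>x. x \<in> carrier_vec N \<Longrightarrow> \<mu> * (x \<bullet> x) \<le> x \<bullet> (M *\<^sub>v x)" and i: "i < N"
  shows "\<mu> \<le> d ! i"
proof -
  define e where "e = vec N (\<lambda>l. if l = i then 1 else (0::real))"
  define x where "x = U *\<^sub>v e"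
  have x: "x \<in> carrier_vec N" unfolding x_def e_def using orthogonal_diagonalization_carrier[OF od] by simp
  have Ux: "transpose_mat U *\<^sub>v x = e"
    unfolding x_def e_def by (rule orthogonal_diagonalization_coords_surj[OF od])
  have "x \<bullet> x = (\<Sum>l\<in>{0..<N}. if l = i then 1 else 0)"
    unfolding orthogonal_diagonalization_inner[OF od x x] Ux e_def by (intro sum.cong) auto
  also have "\<dots> = 1" using i by simp
  finally have "x \<bullet> x = 1" .
  moreover have "x \<bullet> (M *\<^sub>v x) = (\<Sum>l\<in>{0..<N}. if l = i then d ! i else 0)"
    unfolding orthogonal_diagonalization_quadratic_form[OF od x] Ux e_def by (intro sum.cong) auto
  moreover have "\<dots> = d ! i" using i by simp
  ultimately show ?thesis using min[OF x] by simp
qed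

end

lemma second_smallest_eig_mult_le_quadratic_form:
  fixes M :: "real mat"
  assumes M: "M \<in> carrier_mat N N" "transpose_mat M = M" and N: "2 \<le> N"
    and min: "\<And>x. x \<in> carrier_vec N \<Longrightarrow> \<mu> * (x \<bullet> x) \<le> x \<bullet> (M *\<^sub>v x)"
    and v: "v \<in> carrier_vec N" "v \<noteq> 0\<^sub>v N" "M *\<^sub>v v = \<mu> \<cdot>\<^sub>v v"
    and u: "u \<in> carrier_vec N" "u \<bullet> v = 0"
  shows "second_smallest_eig M * (u \<bullet> u) \<le> u \<bullet> (M *\<^sub>v u)"
proof -
  obtain U d where od: "orthogonal_diagonalization N M U d"
    using real_symmetric_orthogonal_diagonalization[OF M] by blast
  obtain j where j: "j < N" "(transpose_mat U *\<^sub>v v) $ j \<noteq> 0"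
    using orthogonal_diagonalization_coords_nonzero[OF od v(1,2)] by blast
  have "sort d ! 1 * (\<Sum>i\<in>{0..<N}. (transpose_mat U *\<^sub>v u) $ i * (transpose_mat U *\<^sub>v u) $ i)
      \<le> (\<Sum>i\<in>{0..<N}. d ! i * ((transpose_mat U *\<^sub>v u) $ i * (transpose_mat U *\<^sub>v u) $ i))"
    using u(2) j
    by (intro sort_second_mult_le_diag_form[OF orthogonal_diagonalization_carrier(4)[OF od] N,
          where z = "\<lambda>i. (transpose_mat U *\<^sub>v v) $ i" and \<mu> = \<mu>])
      (simp_all add: orthogonal_diagonalization_eigenvalue_ge[OF od min]
        orthogonal_diagonalization_eigvec_coords[OF od v(1,3)]
        flip: orthogonal_diagonalization_inner[OF od u(1) v(1)])
  then show ?thesis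
    unfolding second_smallest_eig_def orthogonal_diagonalization_asc_eigs[OF od]
      orthogonal_diagonalization_inner[OF od u(1) u(1)] orthogonal_diagonalization_quadratic_form[OF od u(1)] .
qed

lemma second_smallest_eig_ge_of_quadratic_form:
  fixes M :: "real mat"
  assumes M: "M \<in> carrier_mat N N" "transpose_mat M = M" and N: "2 \<le> N"
    and v: "v \<in> carrier_vec N"
    and form: "\<And>u. u \<in> carrier_vec N \<Longrightarrow> u \<bullet> v = 0 \<Longrightarrow> c * (u \<bullet> u) \<le> u \<bullet> (M *\<^sub>v u)"
  shows "c \<le> second_smallest_eig M"
proof -
  obtain U d where od: "orthogonal_diagonalization N M U d"
    using real_symmetric_orthogonal_diagonalization[OF M] by blast
  have "c \<le> sort d ! 1"
  proof (rule sort_second_ge_of_diag_form[OF orthogonal_diagonalization_carrier(4)[OF od] N,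
        where z = "\<lambda>i. (transpose_mat U *\<^sub>v v) $ i"])
    fix y :: "nat \<Rightarrow> real"
    assume orth: "(\<Sum>i\<in>{0..<N}. y i * (transpose_mat U *\<^sub>v v) $ i) = 0"
    define u where "u = U *\<^sub>v vec N y"
    have u: "u \<in> carrier_vec N" unfolding u_def using orthogonal_diagonalization_carrier[OF od] by simp
    have Uu: "transpose_mat U *\<^sub>v u = vec N y"
      unfolding u_def by (rule orthogonal_diagonalization_coords_surj[OF od])
    have "u \<bullet> v = 0" using orthogonal_diagonalization_inner[OF od u v] orth unfolding Uu by simp
    then have "c * (u \<bullet> u) \<le> u \<bullet> (M *\<^sub>v u)" by (rule form[OF u])
    then show "c * (\<Sum>i\<in>{0..<N}. y i * y i) \<le> (\<Sum>i\<in>{0..<N}. d ! i * (y i * y i))"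
      using orthogonal_diagonalization_inner[OF od u u] orthogonal_diagonalization_quadratic_form[OF od u]
      unfolding Uu by simp
  qed
  then show ?thesis unfolding second_smallest_eig_def orthogonal_diagonalization_asc_eigs[OF od] .
qed

lemma second_smallest_eig_le_of_quadratic_form:
  fixes M :: "real mat"
  assumes M: "M \<in> carrier_mat N N" "transpose_mat M = M" and N: "2 \<le> N"
    and v: "v \<in> carrier_vec N" "v \<noteq> 0\<^sub>v N" "M *\<^sub>v v = \<mu> \<cdot>\<^sub>v v"
    and w: "w \<in> carrier_vec N" "w \<noteq> 0\<^sub>v N" "w \<bullet> v = 0"
    and form: "w \<bullet> (M *\<^sub>v w) \<le> c * (w \<bullet> w)" and \<mu>: "\<mu> \<le> c"
  shows "second_smallest_eig M \<le> c"
proof -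
  obtain U d where od: "orthogonal_diagonalization N M U d"
    using real_symmetric_orthogonal_diagonalization[OF M] by blast
  obtain j where j: "j < N" "(transpose_mat U *\<^sub>v v) $ j \<noteq> 0"
    using orthogonal_diagonalization_coords_nonzero[OF od v(1,2)] by blast
  obtain k where k: "k < N" "(transpose_mat U *\<^sub>v w) $ k \<noteq> 0"
    using orthogonal_diagonalization_coords_nonzero[OF od w(1,2)] by blast
  have "sort d ! 1 \<le> c"
    using j k w(3) form \<mu>
    by (intro sort_second_le_of_diag_form[OF orthogonal_diagonalization_carrier(4)[OF od] N,
          where z = "\<lambda>i. (transpose_mat U *\<^sub>v v) $ i" and y = "\<lambda>i. (transpose_mat U *\<^sub>v w) $ i"])
      (simp_all add: orthogonal_diagonalization_eigvec_coords[OF od v(1,3)]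
        flip: orthogonal_diagonalization_inner[OF od w(1) v(1)] orthogonal_diagonalization_inner[OF od w(1) w(1)]
          orthogonal_diagonalization_quadratic_form[OF od w(1)])
  then show ?thesis unfolding second_smallest_eig_def orthogonal_diagonalization_asc_eigs[OF od] .
qed

section \<open>Graph Laplacians and regular coupling matrices\<close>

lemma vec_ones_nonzero: "0 < n \<Longrightarrow> vec n (\<lambda>_. 1::real) \<noteq> 0\<^sub>v n"
  by (metis index_vec index_zero_vec(1) zero_neq_one)

lemma laplacian_carrier: "laplacian n E \<in> carrier_mat n n"
  unfolding laplacian_def by simp

lemma laplacian_index:
  assumes g: "simple_graph n E" and i: "i < n" and j: "j < n"
  shows "laplacian n E $$ (i,j) = (if i = j then (\<Sum>l\<in>{0..<n}. of_bool (E i l)) else 0) - of_bool (E i j)"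
proof -
  have "{l. l < n \<and> E i l} = {0..<n} \<inter> Collect (E i)" by auto
  then have "real (card {l. l < n \<and> E i l}) = (\<Sum>l\<in>{0..<n}. of_bool (E i l))" by simp
  moreover have "\<not> E i i" using g i unfolding simple_graph_def by auto
  ultimately show ?thesis using i j unfolding laplacian_def by auto
qed

lemma laplacian_symmetric:
  assumes "simple_graph n E"
  shows "transpose_mat (laplacian n E) = laplacian n E"
proof -
  have "E i j = E j i" if "i < n" "j < n" for i j
    using assms that unfolding simple_graph_def by auto
  then show ?thesis
    using laplacian_carrier[of n E] by (intro eq_matI) (auto simp: laplacian_index[OF assms])
qed

lemma laplacian_mult_vec_index:
  assumes g: "simple_graph n E" and x: "x \<in> carrier_vec n" and i: "i < n"
  shows "(laplacian n E *\<^sub>v x) $ i = (\<Sum>j\<in>{0..<n}. of_bool (E i j) * (x $ i - x $ j))"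
proof -
  define D where "D = (\<Sum>l\<in>{0..<n}. of_bool (E i l) :: real)"
  have "(laplacian n E *\<^sub>v x) $ i = (\<Sum>j\<in>{0..<n}. laplacian n E $$ (i,j) * x $ j)"
    using x i laplacian_carrier[of n E] by (auto simp: scalar_prod_def)
  also have "\<dots> = (\<Sum>j\<in>{0..<n}. (if i = j then D else 0) * x $ j - of_bool (E i j) * x $ j)"
    using g i unfolding D_def by (intro sum.cong refl) (auto simp: laplacian_index algebra_simps)
  also have "\<dots> = (\<Sum>j\<in>{0..<n}. (if i = j then D else 0) * x $ j) - (\<Sum>j\<in>{0..<n}. of_bool (E i j) * x $ j)"
    by (rule sum_subtractf)
  also have "\<dots> = D * x $ i - (\<Sum>j\<in>{0..<n}. of_bool (E i j) * x $ j)"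
    using i by (simp only: sum_delta_left)
  also have "\<dots> = (\<Sum>j\<in>{0..<n}. of_bool (E i j) * (x $ i - x $ j))"
    unfolding D_def by (simp add: sum_distrib_right sum_subtractf right_diff_distrib)
  finally show ?thesis .
qed

lemma laplacian_mult_ones:
  assumes "simple_graph n E"
  shows "laplacian n E *\<^sub>v vec n (\<lambda>_. 1) = 0\<^sub>v n"
  using laplacian_mult_vec_index[OF assms] laplacian_carrier[of n E] by (intro eq_vecI) auto

lemma laplacian_quadratic_form:
  assumes g: "simple_graph n E" and x: "x \<in> carrier_vec n"
  shows "x \<bullet> (laplacian n E *\<^sub>v x) = (\<Sum>i\<in>{0..<n}. \<Sum>j\<in>{0..<n}. of_bool (E i j) * (x $ i - x $ j)\<^sup>2) / 2"
proof -
  let ?F = "\<lambda>i j. of_bool (E i j) * (x $ i * x $ i - x $ i * x $ j) :: real"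
  have "x \<bullet> (laplacian n E *\<^sub>v x) = (\<Sum>i\<in>{0..<n}. x $ i * (laplacian n E *\<^sub>v x) $ i)"
    using laplacian_carrier[of n E] by (simp add: scalar_prod_def)
  also have "\<dots> = (\<Sum>i\<in>{0..<n}. \<Sum>j\<in>{0..<n}. ?F i j)"
    by (intro sum.cong refl) (simp add: laplacian_mult_vec_index[OF g x] sum_distrib_left algebra_simps)
  finally have form_eq: "x \<bullet> (laplacian n E *\<^sub>v x) = (\<Sum>i\<in>{0..<n}. \<Sum>j\<in>{0..<n}. ?F i j)" .
  have "(\<Sum>i\<in>{0..<n}. \<Sum>j\<in>{0..<n}. ?F i j) = (\<Sum>j\<in>{0..<n}. \<Sum>i\<in>{0..<n}. ?F i j)"
    by (rule sum.swap)
  also have "\<dots> = (\<Sum>i\<in>{0..<n}. \<Sum>j\<in>{0..<n}. of_bool (E i j) * (x $ j * x $ j - x $ j * x $ i))"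
    using g unfolding simple_graph_def by (intro sum.cong refl) auto
  finally have swap_eq: "(\<Sum>i\<in>{0..<n}. \<Sum>j\<in>{0..<n}. ?F i j)
      = (\<Sum>i\<in>{0..<n}. \<Sum>j\<in>{0..<n}. of_bool (E i j) * (x $ j * x $ j - x $ j * x $ i))" .
  have "(\<Sum>i\<in>{0..<n}. \<Sum>j\<in>{0..<n}. of_bool (E i j) * (x $ i - x $ j)\<^sup>2)
      = (\<Sum>i\<in>{0..<n}. \<Sum>j\<in>{0..<n}. ?F i j)
      + (\<Sum>i\<in>{0..<n}. \<Sum>j\<in>{0..<n}. of_bool (E i j) * (x $ j * x $ j - x $ j * x $ i))"
    by (simp add: sum.distrib[symmetric] power2_eq_square algebra_simps)
  then show ?thesis using form_eq swap_eq by simp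
qed

lemma laplacian_quadratic_form_nonneg:
  assumes "simple_graph n E" "x \<in> carrier_vec n"
  shows "0 \<le> x \<bullet> (laplacian n E *\<^sub>v x)"
  unfolding laplacian_quadratic_form[OF assms] by (intro divide_nonneg_pos sum_nonneg mult_nonneg_nonneg) auto

lemma sum_squares_centered:
  fixes f :: "nat \<Rightarrow> real"
  assumes "0 < n"
  shows "(\<Sum>i\<in>{0..<n}. (f i - (\<Sum>j\<in>{0..<n}. f j) / n) * (f i - (\<Sum>j\<in>{0..<n}. f j) / n))
    = (\<Sum>i\<in>{0..<n}. f i * f i) - (\<Sum>i\<in>{0..<n}. f i)\<^sup>2 / n"
proof -
  let ?m = "(\<Sum>j\<in>{0..<n}. f j) / n"
  have "(\<Sum>i\<in>{0..<n}. (f i - ?m) * (f i - ?m)) = (\<Sum>i\<in>{0..<n}. f i * f i - 2 * ?m * f i + ?m * ?m)"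
    by (intro sum.cong refl) (simp add: algebra_simps)
  also have "\<dots> = (\<Sum>i\<in>{0..<n}. f i * f i) - 2 * ?m * (\<Sum>i\<in>{0..<n}. f i) + n * (?m * ?m)"
    by (simp add: sum.distrib sum_subtractf sum_distrib_left)
  finally show ?thesis using assms by (simp add: field_simps power2_eq_square)
qed

lemma laplacian_quadratic_form_ge_second_smallest_eig:
  assumes g: "simple_graph n E" and n: "2 \<le> n" and a: "a \<in> carrier_vec n"
    and c: "c \<le> second_smallest_eig (laplacian n E)"
  shows "c * (a \<bullet> a - (\<Sum>i\<in>{0..<n}. a $ i)\<^sup>2 / n) \<le> a \<bullet> (laplacian n E *\<^sub>v a)"
proof -
  let ?L = "laplacian n E" and ?one = "vec n (\<lambda>_. 1::real)"
  \<comment> \<open>Centring a does not change its Laplacian form, and makes it orthogonal to the kernel vector.\<close>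
  define s where "s = (\<Sum>i\<in>{0..<n}. a $ i)"
  define u where "u = vec n (\<lambda>i. a $ i - s / n)"
  have u: "u \<in> carrier_vec n" unfolding u_def by simp
  have uu: "u \<bullet> u = a \<bullet> a - s\<^sup>2 / n"
    using sum_squares_centered[of n "\<lambda>i. a $ i"] n a unfolding u_def s_def by (simp add: scalar_prod_def)
  have "c * (u \<bullet> u) \<le> second_smallest_eig ?L * (u \<bullet> u)"
    using c unfolding u_def by (intro mult_right_mono) (simp_all add: scalar_prod_def sum_nonneg)
  also have "\<dots> \<le> u \<bullet> (?L *\<^sub>v u)"
  proof (rule second_smallest_eig_mult_le_quadratic_form[OF laplacian_carrier laplacian_symmetric[OF g] n])
    show "0 * (x \<bullet> x) \<le> x \<bullet> (?L *\<^sub>v x)" if "x \<in> carrier_vec n" for x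
      using laplacian_quadratic_form_nonneg[OF g that] by simp
    show "?L *\<^sub>v ?one = 0 \<cdot>\<^sub>v ?one" using laplacian_mult_ones[OF g] by auto
    show "u \<bullet> ?one = 0" using n unfolding u_def s_def by (simp add: scalar_prod_def sum_subtractf)
  qed (use u n vec_ones_nonzero[of n] in auto)
  also have "u \<bullet> (?L *\<^sub>v u) = a \<bullet> (?L *\<^sub>v a)"
    unfolding laplacian_quadratic_form[OF g u] laplacian_quadratic_form[OF g a] unfolding u_def by simp
  finally show ?thesis unfolding uu s_def .
qed

lemma sum_01_eq_card:
  fixes f :: "nat \<Rightarrow> real"
  assumes "\<And>j. j < n \<Longrightarrow> f j = 0 \<or> f j = 1"
  shows "(\<Sum>j\<in>{0..<n}. f j) = card {j. j < n \<and> f j = 1}"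
proof -
  have "(\<Sum>j\<in>{0..<n}. f j) = (\<Sum>j\<in>{0..<n}. if f j = 1 then 1 else 0)"
    using assms by (intro sum.cong refl) force
  also have "\<dots> = card ({0..<n} \<inter> {j. f j = 1})" by (simp add: sum.If_cases)
  also have "{0..<n} \<inter> {j. f j = 1} = {j. j < n \<and> f j = 1}" by auto
  finally show ?thesis .
qed

lemma bilinear_form_sum:
  assumes "A \<in> carrier_mat n m" "a \<in> carrier_vec n" "b \<in> carrier_vec m"
  shows "a \<bullet> (A *\<^sub>v b) = (\<Sum>i\<in>{0..<n}. \<Sum>j\<in>{0..<m}. a $ i * A $$ (i,j) * b $ j)"
  using assms by (auto simp: scalar_prod_def sum_distrib_left mult.assoc intro!: sum.cong)

context
  fixes n k :: nat and B :: "real mat"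
  assumes B: "k_regular_01 n k B"
begin

lemma k_regular_01_carrier: "B \<in> carrier_mat n n"
  using B unfolding k_regular_01_def by simp

lemma k_regular_01_nonneg: "i < n \<Longrightarrow> j < n \<Longrightarrow> 0 \<le> B $$ (i,j)"
  using B unfolding k_regular_01_def by force

lemma k_regular_01_row_sum: "i < n \<Longrightarrow> (\<Sum>j\<in>{0..<n}. B $$ (i,j)) = k"
  using B unfolding k_regular_01_def by (subst sum_01_eq_card) auto

lemma k_regular_01_col_sum: "j < n \<Longrightarrow> (\<Sum>i\<in>{0..<n}. B $$ (i,j)) = k"
  using B unfolding k_regular_01_def by (subst sum_01_eq_card) auto

lemma k_regular_01_mult_ones: "B *\<^sub>v vec n (\<lambda>_. 1) = real k \<cdot>\<^sub>v vec n (\<lambda>_. 1)"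
  using k_regular_01_carrier k_regular_01_row_sum by (intro eq_vecI) (auto simp: scalar_prod_def)

lemma k_regular_01_transpose_mult_ones: "transpose_mat B *\<^sub>v vec n (\<lambda>_. 1) = real k \<cdot>\<^sub>v vec n (\<lambda>_. 1)"
  using k_regular_01_carrier k_regular_01_col_sum by (intro eq_vecI) (auto simp: scalar_prod_def)

lemma k_regular_01_coupling_form_ge:
  fixes c :: real
  assumes a: "a \<in> carrier_vec n" and b: "b \<in> carrier_vec n"
  shows "2 * c * k * ((\<Sum>i\<in>{0..<n}. a $ i) - (\<Sum>i\<in>{0..<n}. b $ i)) - c * c * n * k
     \<le> k * (a \<bullet> a) + k * (b \<bullet> b) - 2 * (a \<bullet> (B *\<^sub>v b))"
proof -
  \<comment> \<open>Expand the nonnegative sum, weighted by B, of the squares (a_i - b_j - c)^2.\<close>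
  let ?B = "\<lambda>i j. B $$ (i,j)"
  define Saa where "Saa = (\<Sum>i\<in>{0..<n}. \<Sum>j\<in>{0..<n}. (a $ i * a $ i) * ?B i j)"
  define Sbb where "Sbb = (\<Sum>i\<in>{0..<n}. \<Sum>j\<in>{0..<n}. (b $ j * b $ j) * ?B i j)"
  define SB where "SB = (\<Sum>i\<in>{0..<n}. \<Sum>j\<in>{0..<n}. ?B i j)"
  define SaBb where "SaBb = (\<Sum>i\<in>{0..<n}. \<Sum>j\<in>{0..<n}. a $ i * ?B i j * b $ j)"
  define Sa where "Sa = (\<Sum>i\<in>{0..<n}. \<Sum>j\<in>{0..<n}. a $ i * ?B i j)"
  define Sb where "Sb = (\<Sum>i\<in>{0..<n}. \<Sum>j\<in>{0..<n}. b $ j * ?B i j)"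
  have "0 \<le> ?B i j * ((a $ i - b $ j - c) * (a $ i - b $ j - c))" if "i \<in> {0..<n}" "j \<in> {0..<n}" for i j
    using k_regular_01_nonneg[of i j] that by simp
  then have "0 \<le> (\<Sum>i\<in>{0..<n}. \<Sum>j\<in>{0..<n}. ?B i j * ((a $ i - b $ j - c) * (a $ i - b $ j - c)))"
    by (intro sum_nonneg) blast
  also have "\<dots> = (\<Sum>i\<in>{0..<n}. \<Sum>j\<in>{0..<n}. (((((a $ i * a $ i) * ?B i j + (b $ j * b $ j) * ?B i j)
      + (c * c) * ?B i j) - 2 * (a $ i * ?B i j * b $ j)) - (2 * c) * (a $ i * ?B i j)) + (2 * c) * (b $ j * ?B i j))"
    by (intro sum.cong refl) (simp add: algebra_simps)
  also have "\<dots> = Saa + Sbb + (c * c) * SB - 2 * SaBb - (2 * c) * Sa + (2 * c) * Sb"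
    unfolding Saa_def Sbb_def SB_def SaBb_def Sa_def Sb_def
    by (simp only: sum.distrib sum_subtractf sum_distrib_left)
  finally have main: "0 \<le> Saa + Sbb + (c * c) * SB - 2 * SaBb - (2 * c) * Sa + (2 * c) * Sb" .
  have "Saa = (\<Sum>i\<in>{0..<n}. (a $ i * a $ i) * (\<Sum>j\<in>{0..<n}. ?B i j))"
    unfolding Saa_def by (simp add: sum_distrib_left)
  then have Saa: "Saa = k * (a \<bullet> a)"
    using a by (simp add: k_regular_01_row_sum scalar_prod_def sum_distrib_left mult.commute)
  have "Sbb = (\<Sum>j\<in>{0..<n}. (b $ j * b $ j) * (\<Sum>i\<in>{0..<n}. ?B i j))"
    unfolding Sbb_def by (subst sum.swap) (simp add: sum_distrib_left)
  then have Sbb: "Sbb = k * (b \<bullet> b)"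
    using b by (simp add: k_regular_01_col_sum scalar_prod_def sum_distrib_left mult.commute)
  have SB: "SB = n * k" unfolding SB_def by (simp add: k_regular_01_row_sum)
  have SaBb: "SaBb = a \<bullet> (B *\<^sub>v b)" unfolding SaBb_def using bilinear_form_sum[OF k_regular_01_carrier a b] by simp
  have "Sa = (\<Sum>i\<in>{0..<n}. a $ i * (\<Sum>j\<in>{0..<n}. ?B i j))"
    unfolding Sa_def by (simp add: sum_distrib_left)
  then have Sa: "Sa = k * (\<Sum>i\<in>{0..<n}. a $ i)"
    by (simp add: k_regular_01_row_sum sum_distrib_left mult.commute)
  have "Sb = (\<Sum>j\<in>{0..<n}. b $ j * (\<Sum>i\<in>{0..<n}. ?B i j))"
    unfolding Sb_def by (subst sum.swap) (simp add: sum_distrib_left)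
  then have Sb: "Sb = k * (\<Sum>j\<in>{0..<n}. b $ j)"
    by (simp add: k_regular_01_col_sum sum_distrib_left mult.commute)
  show ?thesis using main unfolding Saa Sbb SB SaBb Sa Sb by (simp add: algebra_simps)
qed

end

section \<open>The supra-Laplacian and the transition threshold\<close>

lemma add_smult_one_mult_vec:
  fixes A :: "real mat"
  assumes "A \<in> carrier_mat n n" "x \<in> carrier_vec n"
  shows "(A + c \<cdot>\<^sub>m 1\<^sub>m n) *\<^sub>v x = A *\<^sub>v x + c \<cdot>\<^sub>v x"
  using assms by (intro eq_vecI) (auto simp: add_scalar_prod_distrib[of _ n])

lemma smult_mat_mult_vec:
  fixes A :: "real mat"
  assumes "A \<in> carrier_mat n m" "x \<in> carrier_vec m"
  shows "(c \<cdot>\<^sub>m A) *\<^sub>v x = c \<cdot>\<^sub>v (A *\<^sub>v x)"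
  using assms by (intro eq_vecI) (auto simp: scalar_prod_def sum_distrib_left mult.assoc)

context
  fixes n k :: nat and Q1 Q2 B :: "real mat" and p :: real
  assumes Q1: "Q1 \<in> carrier_mat n n" and Q2: "Q2 \<in> carrier_mat n n" and B: "B \<in> carrier_mat n n"
begin

lemma supra_laplacian_carrier: "supra_laplacian k Q1 Q2 B p \<in> carrier_mat (n + n) (n + n)"
  unfolding supra_laplacian_def using Q1 Q2 B by simp

lemma supra_laplacian_symmetric:
  assumes "transpose_mat Q1 = Q1" "transpose_mat Q2 = Q2"
  shows "transpose_mat (supra_laplacian k Q1 Q2 B p) = supra_laplacian k Q1 Q2 B p"
proof -
  have "Q1 $$ (i,j) = Q1 $$ (j,i)" "Q2 $$ (i,j) = Q2 $$ (j,i)" if "i < n" "j < n" for i j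
    using assms Q1 Q2 that by (metis carrier_matD index_transpose_mat(1))+
  then show ?thesis unfolding supra_laplacian_def using Q1 Q2 B by (intro eq_matI) auto
qed

lemma supra_laplacian_mult_append:
  assumes a: "a \<in> carrier_vec n" and b: "b \<in> carrier_vec n"
  shows "supra_laplacian k Q1 Q2 B p *\<^sub>v (a @\<^sub>v b)
    = (Q1 *\<^sub>v a + (k * p) \<cdot>\<^sub>v a + - (p \<cdot>\<^sub>v (B *\<^sub>v b)))
      @\<^sub>v (- (p \<cdot>\<^sub>v (transpose_mat B *\<^sub>v a)) + (Q2 *\<^sub>v b + (k * p) \<cdot>\<^sub>v b))"
  unfolding supra_laplacian_def using Q1 Q2 B a b
  by (simp add: four_block_mat_mult_vec[of _ n n _ n _ n] add_smult_one_mult_vec smult_mat_mult_vec)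

lemma supra_laplacian_quadratic_form:
  assumes a: "a \<in> carrier_vec n" and b: "b \<in> carrier_vec n"
  shows "(a @\<^sub>v b) \<bullet> (supra_laplacian k Q1 Q2 B p *\<^sub>v (a @\<^sub>v b))
    = a \<bullet> (Q1 *\<^sub>v a) + b \<bullet> (Q2 *\<^sub>v b) + p * (k * (a \<bullet> a) + k * (b \<bullet> b) - 2 * (a \<bullet> (B *\<^sub>v b)))"
proof -
  have "b \<bullet> (transpose_mat B *\<^sub>v a) = a \<bullet> (B *\<^sub>v b)"
    using transpose_vec_mult_scalar[OF B b a] comm_scalar_prod[of b n "transpose_mat B *\<^sub>v a"] a b B
    by simp
  then show ?thesis
    unfolding supra_laplacian_mult_append[OF a b] using Q1 Q2 B a b
    by (simp add: scalar_prod_append[of _ n _ n] scalar_prod_add_distrib[of _ n] algebra_simps)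
qed

end

lemma supra_laplacian_mult_ones:
  assumes g1: "simple_graph n E1" and g2: "simple_graph n E2" and B: "k_regular_01 n k B"
  shows "supra_laplacian k (laplacian n E1) (laplacian n E2) B p *\<^sub>v vec (n + n) (\<lambda>_. 1) = 0\<^sub>v (n + n)"
proof -
  have "vec (n + n) (\<lambda>_. 1) = vec n (\<lambda>_. 1) @\<^sub>v vec n (\<lambda>_. (1::real))" by (intro eq_vecI) auto
  then show ?thesis
    using supra_laplacian_mult_append[OF laplacian_carrier laplacian_carrier k_regular_01_carrier[OF B],
        of "vec n (\<lambda>_. 1)" "vec n (\<lambda>_. 1)", where k = k and p = p]
    by (intro eq_vecI) (auto simp: laplacian_mult_ones[OF g1] laplacian_mult_ones[OF g2]
        k_regular_01_mult_ones[OF B] k_regular_01_transpose_mult_ones[OF B])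
qed

lemma vec_ones_append: "vec (n + n) (\<lambda>_. 1) = vec n (\<lambda>_. 1) @\<^sub>v vec n (\<lambda>_. (1::real))"
  by (intro eq_vecI) auto

context
  fixes n k :: nat and E1 E2 :: "nat \<Rightarrow> nat \<Rightarrow> bool" and B :: "real mat"
  assumes n: "2 \<le> n" and g1: "simple_graph n E1" and g2: "simple_graph n E2"
    and k: "1 \<le> k" and B: "k_regular_01 n k B"
begin

abbreviation supra :: "real \<Rightarrow> real mat" where
  "supra p \<equiv> supra_laplacian k (laplacian n E1) (laplacian n E2) B p"

lemmas supra_carrier = supra_laplacian_carrier[OF laplacian_carrier laplacian_carrier k_regular_01_carrier[OF B]]

lemma supra_symmetric: "transpose_mat (supra p) = supra p"
  by (rule supra_laplacian_symmetric[OF laplacian_carrier laplacian_carrier k_regular_01_carrier[OF B]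
        laplacian_symmetric[OF g1] laplacian_symmetric[OF g2]])

lemma supra_eigvec_ones: "supra p *\<^sub>v vec (n + n) (\<lambda>_. 1) = 0 \<cdot>\<^sub>v vec (n + n) (\<lambda>_. 1)"
  using supra_laplacian_mult_ones[OF g1 g2 B] by auto

lemma supra_quadratic_form_ge:
  fixes p :: real
  assumes p: "0 < p"
    and p1: "2 * k * p \<le> second_smallest_eig (laplacian n E1)"
    and p2: "2 * k * p \<le> second_smallest_eig (laplacian n E2)"
    and u: "u \<in> carrier_vec (n + n)" "u \<bullet> vec (n + n) (\<lambda>_. 1) = 0"
  shows "2 * k * p * (u \<bullet> u) \<le> u \<bullet> (supra p *\<^sub>v u)"
proof -
  define a where "a = vec_first u n"
  define b where "b = vec_last u n"
  have a: "a \<in> carrier_vec n" and b: "b \<in> carrier_vec n" and ab: "u = a @\<^sub>v b"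
    using u(1) unfolding a_def b_def by auto
  define s where "s = (\<Sum>i\<in>{0..<n}. a $ i)"
  have "u \<bullet> vec (n + n) (\<lambda>_. 1) = s + (\<Sum>i\<in>{0..<n}. b $ i)"
    unfolding ab vec_ones_append scalar_prod_append[OF a b vec_carrier vec_carrier] s_def using a b
    by (simp add: scalar_prod_def)
  then have sb: "(\<Sum>i\<in>{0..<n}. b $ i) = - s" using u(2) by simp
  have n0: "0 < real n" using n by simp
  \<comment> \<open>Each layer contributes at least its algebraic connectivity times the variance of its block,
    and the coupling term makes up for the two means.\<close>
  have qa: "2 * k * p * (a \<bullet> a - s\<^sup>2 / n) \<le> a \<bullet> (laplacian n E1 *\<^sub>v a)"
    using laplacian_quadratic_form_ge_second_smallest_eig[OF g1 n a p1] unfolding s_def .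
  have qb: "2 * k * p * (b \<bullet> b - s\<^sup>2 / n) \<le> b \<bullet> (laplacian n E2 *\<^sub>v b)"
    using laplacian_quadratic_form_ge_second_smallest_eig[OF g2 n b p2] sb by simp
  have "4 * k * s\<^sup>2 / n \<le> k * (a \<bullet> a) + k * (b \<bullet> b) - 2 * (a \<bullet> (B *\<^sub>v b))"
    using k_regular_01_coupling_form_ge[OF B a b, of "2 * s / n"] n0 sb
    unfolding s_def[symmetric] by (simp add: field_simps power2_eq_square)
  then have qc: "p * (4 * k * s\<^sup>2 / n) \<le> p * (k * (a \<bullet> a) + k * (b \<bullet> b) - 2 * (a \<bullet> (B *\<^sub>v b)))"
    using p by (intro mult_left_mono) auto
  have "2 * k * p * (a \<bullet> a - s\<^sup>2 / n) + 2 * k * p * (b \<bullet> b - s\<^sup>2 / n) + p * (4 * k * s\<^sup>2 / n)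
      = 2 * k * p * (a \<bullet> a + b \<bullet> b)"
    using n0 by (simp add: field_simps)
  then show ?thesis
    unfolding ab supra_laplacian_quadratic_form[OF laplacian_carrier laplacian_carrier
        k_regular_01_carrier[OF B] a b] scalar_prod_append[OF a b a b]
    using qa qb qc by linarith
qed

lemma supra_second_smallest_eig_le:
  fixes p :: real
  assumes p: "0 \<le> p"
  shows "second_smallest_eig (supra p) \<le> 2 * k * p"
proof -
  have N: "2 \<le> n + n" using n by simp
  define w where "w = vec n (\<lambda>_. 1) @\<^sub>v vec n (\<lambda>_. - 1::real)"
  have w: "w \<in> carrier_vec (n + n)" unfolding w_def by simp
  have "w \<noteq> 0\<^sub>v (n + n)"
  proof
    assume "w = 0\<^sub>v (n + n)"
    then have "w $ 0 = 0" using n by simp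
    then show False using n unfolding w_def by simp
  qed
  moreover have "w \<bullet> vec (n + n) (\<lambda>_. 1) = 0"
    unfolding w_def vec_ones_append scalar_prod_append[OF vec_carrier vec_carrier vec_carrier vec_carrier]
    by (simp add: scalar_prod_def sum_negf)
  moreover have "w \<bullet> (supra p *\<^sub>v w) \<le> 2 * k * p * (w \<bullet> w)"
  proof -
    let ?o = "vec n (\<lambda>_. 1::real)" and ?m = "vec n (\<lambda>_. - 1::real)"
    have "?o \<bullet> (laplacian n E1 *\<^sub>v ?o) = 0" "?m \<bullet> (laplacian n E2 *\<^sub>v ?m) = 0"
      by (simp_all add: laplacian_quadratic_form[OF g1] laplacian_quadratic_form[OF g2])
    moreover have "?o \<bullet> (B *\<^sub>v ?m) = - (n * k)"
      using bilinear_form_sum[OF k_regular_01_carrier[OF B], of ?o ?m]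
      by (simp add: sum_negf k_regular_01_row_sum[OF B])
    moreover have "?o \<bullet> ?o = n" "?m \<bullet> ?m = n" by (simp_all add: scalar_prod_def)
    ultimately have "w \<bullet> (supra p *\<^sub>v w) = 2 * k * p * (2 * n)" "w \<bullet> w = 2 * n"
      unfolding w_def supra_laplacian_quadratic_form[OF laplacian_carrier laplacian_carrier
          k_regular_01_carrier[OF B] vec_carrier vec_carrier]
        scalar_prod_append[OF vec_carrier vec_carrier vec_carrier vec_carrier]
      by (simp_all add: algebra_simps)
    then show ?thesis by simp
  qed
  ultimately show ?thesis
    using p vec_ones_nonzero[of "n + n"] n
    by (intro second_smallest_eig_le_of_quadratic_form[OF supra_carrier supra_symmetric N _ _ supra_eigvec_ones w])
      auto
qed

lemma supra_second_smallest_eig_eq: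
  fixes p :: real
  assumes p: "0 < p"
    and p1: "2 * k * p \<le> second_smallest_eig (laplacian n E1)"
    and p2: "2 * k * p \<le> second_smallest_eig (laplacian n E2)"
  shows "second_smallest_eig (supra p) = 2 * k * p"
proof (rule antisym)
  show "second_smallest_eig (supra p) \<le> 2 * k * p" using p by (intro supra_second_smallest_eig_le) simp
  show "2 * k * p \<le> second_smallest_eig (supra p)"
  proof (rule second_smallest_eig_ge_of_quadratic_form[OF supra_carrier supra_symmetric _ vec_carrier])
    show "2 \<le> n + n" using n by simp
  qed (rule supra_quadratic_form_ge[OF p p1 p2])
qed

lemma transition_points_bounded:
  obtains C where "\<And>p::real. 0 < p \<Longrightarrow> second_smallest_eig (supra p) = 2 * k * p \<Longrightarrow> p \<le> C"
proof -
  \<comment> \<open>A test vector living on the first layer only has Rayleigh quotient growing like k p, not 2 k p.\<close>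
  define a where "a = vec n (\<lambda>i. if i = 0 then 1 else if i = 1 then - 1 else (0::real))"
  define w where "w = a @\<^sub>v 0\<^sub>v n"
  define C where "C = a \<bullet> (laplacian n E1 *\<^sub>v a)"
  have a: "a \<in> carrier_vec n" unfolding a_def by simp
  have w: "w \<in> carrier_vec (n + n)" unfolding w_def using a by simp
  have "a \<bullet> a = (\<Sum>i\<in>{0..<n}. (if i = 0 then 1 else if i = 1 then - 1 else 0) * a $ i)"
    unfolding a_def by (simp add: scalar_prod_def)
  then have aa: "a \<bullet> a = 2"
    using n sum_two_points[of 0 n 1 1 "- 1" "\<lambda>i. a $ i"]
    unfolding a_def by simp
  have "(\<Sum>i\<in>{0..<n}. a $ i) = (\<Sum>i\<in>{0..<n}. (if i = 0 then 1 else if i = 1 then - 1 else 0) * 1)"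
    unfolding a_def by simp
  then have sa: "(\<Sum>i\<in>{0..<n}. a $ i) = 0"
    using n sum_two_points[of 0 n 1 1 "- 1" "\<lambda>_. 1"] by simp
  have B0: "B *\<^sub>v 0\<^sub>v n = 0\<^sub>v n" using k_regular_01_carrier[OF B] by (intro eq_vecI) auto
  have "w \<bullet> w = 2" unfolding w_def using a aa by (simp add: scalar_prod_append[of _ n _ n])
  moreover have "w \<noteq> 0\<^sub>v (n + n)" using \<open>w \<bullet> w = 2\<close> by auto
  moreover have "w \<bullet> vec (n + n) (\<lambda>_. 1) = 0"
    unfolding w_def vec_ones_append scalar_prod_append[OF a zero_carrier_vec vec_carrier vec_carrier]
    using a sa by (simp add: scalar_prod_def)
  moreover have "w \<bullet> (supra p *\<^sub>v w) = C + 2 * k * p" for p :: real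
    unfolding w_def C_def supra_laplacian_quadratic_form[OF laplacian_carrier laplacian_carrier
        k_regular_01_carrier[OF B] a zero_carrier_vec]
    using a aa B0 laplacian_carrier[of n E2] by simp
  moreover have "0 \<le> C" unfolding C_def by (rule laplacian_quadratic_form_nonneg[OF g1 a])
  ultimately have bound: "second_smallest_eig (supra p) \<le> C / 2 + k * p" if "0 < p" for p :: real
    using that vec_ones_nonzero[of "n + n"] n
    by (intro second_smallest_eig_le_of_quadratic_form[OF supra_carrier supra_symmetric _ _ _
          supra_eigvec_ones w]) auto
  show ?thesis
  proof (rule that[of "C / (2 * k)"])
    fix p :: real assume "0 < p" "second_smallest_eig (supra p) = 2 * k * p"
    then have "2 * k * p \<le> C / 2 + k * p" using bound by metis
    then show "p \<le> C / (2 * k)" using k by (simp add: field_simps)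
  qed
qed

end

theorem mainTheorem3:
  fixes n k :: nat and E1 E2 :: "nat \<Rightarrow> nat \<Rightarrow> bool" and B :: "real mat"
  assumes "n \<ge> 2"
    and "simple_graph n E1" and "simple_graph n E2"
    and "1 \<le> k" and "k \<le> n"
    and "k_regular_01 n k B"
  shows "transition_threshold k (laplacian n E1) (laplacian n E2) B
           \<ge> min (second_smallest_eig (laplacian n E1)) (second_smallest_eig (laplacian n E2)) / (2 * real k)"
proof -
  let ?T = "{0} \<union> {p. p > 0 \<and> second_smallest_eig (supra_laplacian k (laplacian n E1) (laplacian n E2) B p) = 2 * real k * p}"
  define m where "m = min (second_smallest_eig (laplacian n E1)) (second_smallest_eig (laplacian n E2))"
  obtain C where "\<And>p::real. 0 < p \<Longrightarrow> second_smallest_eig (supra_laplacian k (laplacian n E1) (laplacian n E2) B p) = 2 * k * p \<Longrightarrow> p \<le> C"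
    using transition_points_bounded[OF assms(1-4,6)] by blast
  \<comment> \<open>Without this the supremum of the set would be unspecified.\<close>
  then have bdd: "bdd_above ?T" by (intro bdd_aboveI[of _ "max 0 C"]) force
  have "m / (2 * real k) \<le> Sup ?T"
  proof (cases "0 < m")
    case True
    have "m / (2 * real k) \<in> ?T"
      using True assms(4) supra_second_smallest_eig_eq[OF assms(1-4,6), of "m / (2 * real k)"] by (simp add: m_def)
    then show ?thesis by (rule cSup_upper[OF _ bdd])
  next
    case False
    then have "m / (2 * real k) \<le> 0" by (simp add: divide_nonpos_nonneg)
    also have "0 \<le> Sup ?T" by (rule cSup_upper[OF _ bdd]) simp
    finally show ?thesis .
  qed
  then show ?thesis unfolding transition_threshold_def m_def .
qed

end
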